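(* Let $n\ge 7$ and let $S$ be a nonlocal metric basis of $W_{1,n}$ (so $S\subseteq\{0,\dots,n-1\}$ and $|S|\ge 2$). Then: (i) every gap of $S$ has at most $4$ vertices; (ii) at most one gap of $S$ has at least $3$ vertices; (iii) if a gap $A_{i,j}$ of $S$ has at least $2$ vertices, then each gap of $S$ neighboring $A_{i,j}$ (i.e., the gap of the form $A_{h,i}$ and the gap of the form $A_{j,k}$) has at most one vertex. (iv) Moreover, $W_{1,n}$ has a nonlocal metric basis $S'\subseteq\{0,\dots,n-1\}$ that satisfies (i)–(iii) and has no gap with exactly $3$ vertices.
   Context: The wheel $W_{1,n}=K_1+C_n$ has cycle vertices $0,1,\dots,n-1$ (arithmetic modulo $n$, $i$ adjacent to $i\pm1$) and a center adjacent to all of them; $d(u,v)$ is the shortest-path distance. A set $X$ of vertices resolves two vertices $u,v$ if some $x\in X$ satisfies $d(u,x)\neq d(v,x)$. $X$ is a nonlocal resolving set if it resolves every pair of distinct non-adjacent vertices; the nonlocal metric dimension is the minimum size of such a set, and a nonlocal metric basis is a nonlocal resolving set of minimum size (for $n\ge 7$ no such basis contains the center). For $X\subseteq\{0,\dots,n-1\}$ with $|X|\ge 2$, a gap of $X$ is a set $A_{i,j}=\{i+1,i+2,\dots,j-1\}$ (indices mod $n$, proceeding from $i$ in increasing direction until $j$), where $i\ne j$ are elements of $X$ such that $\{i+1,\dots,j-1\}\cap X=\emptyset$; a gap may be empty, and its number of vertices is $|A_{i,j}|$. Gaps $A_{h,i}$ and $A_{i,j}$ sharing the endpoint $i$ are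 called neighboring gaps. *)

theory Defs
  imports Main
begin

text \<open>Wheel graph W_{1,n}: cycle vertices 0..n-1, center vertex n.\<close>

definition wheel_center :: "nat \<Rightarrow> nat" where
  "wheel_center n = n"

definition wheel_V :: "nat \<Rightarrow> nat set" where
  "wheel_V n = {..n}"

definition wheel_adj :: "nat \<Rightarrow> nat \<Rightarrow> nat \<Rightarrow> bool" where
  "wheel_adj n u v \<longleftrightarrow> u \<in> wheel_V n \<and> v \<in> wheel_V n \<and> u \<noteq> v \<and>
     (u = wheel_center n \<or> v = wheel_center n \<or>
      (u < n \<and> v < n \<and> (v = (u + 1) mod n \<or> u = (v + 1) mod n)))"

definition wheel_walk :: "nat \<Rightarrow> nat list \<Rightarrow> bool" where
  "wheel_walk n xs \<longleftrightarrow> xs \<noteq> [] \<and> set xs \<subseteq> wheel_V n \<and>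
     (\<forall>i. Suc i < length xs \<longrightarrow> wheel_adj n (xs ! i) (xs ! Suc i))"

definition wheel_dist :: "nat \<Rightarrow> nat \<Rightarrow> nat \<Rightarrow> nat" where
  "wheel_dist n u v = (LEAST k. \<exists>xs. wheel_walk n xs \<and> hd xs = u \<and> last xs = v \<and> length xs = Suc k)"

definition resolves :: "nat \<Rightarrow> nat set \<Rightarrow> nat \<Rightarrow> nat \<Rightarrow> bool" where
  "resolves n X u v \<longleftrightarrow> (\<exists>x\<in>X. wheel_dist n u x \<noteq> wheel_dist n v x)"

definition nonlocal_resolving :: "nat \<Rightarrow> nat set \<Rightarrow> bool" where
  "nonlocal_resolving n X \<longleftrightarrow> X \<subseteq> wheel_V n \<and>
     (\<forall>u\<in>wheel_V n. \<forall>v\<in>wheel_V n. u \<noteq> v \<and> \<not> wheel_adj n u v \<longrightarrow> resolves n X u v)"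

definition nonlocal_dim :: "nat \<Rightarrow> nat" where
  "nonlocal_dim n = (LEAST k. \<exists>X. nonlocal_resolving n X \<and> card X = k)"

definition nonlocal_basis :: "nat \<Rightarrow> nat set \<Rightarrow> bool" where
  "nonlocal_basis n X \<longleftrightarrow> nonlocal_resolving n X \<and> card X = nonlocal_dim n"

text \<open>The set A_{i,j} = {i+1, ..., j-1} (mod n), going from i in increasing direction to j.\<close>
definition gap_set :: "nat \<Rightarrow> nat \<Rightarrow> nat \<Rightarrow> nat set" where
  "gap_set n i j = {(i + k) mod n | k. 0 < k \<and> k < (j + n - i) mod n}"

definition is_gap :: "nat \<Rightarrow> nat set \<Rightarrow> nat \<Rightarrow> nat \<Rightarrow> bool" where
  "is_gap n S i j \<longleftrightarrow> i \<in> S \<and> j \<in> S \<and> i \<noteq> j \<and> gap_set n i j \<inter> S = {}"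

definition gap_props :: "nat \<Rightarrow> nat set \<Rightarrow> bool" where
  "gap_props n S \<longleftrightarrow>
     (\<forall>i j. is_gap n S i j \<longrightarrow> card (gap_set n i j) \<le> 4) \<and>
     (\<forall>i j i' j'. is_gap n S i j \<and> is_gap n S i' j' \<and>
        card (gap_set n i j) \<ge> 3 \<and> card (gap_set n i' j') \<ge> 3 \<longrightarrow> i = i' \<and> j = j') \<and>
     (\<forall>i j. is_gap n S i j \<and> card (gap_set n i j) \<ge> 2 \<longrightarrow>
        (\<forall>h. is_gap n S h i \<longrightarrow> card (gap_set n h i) \<le> 1) \<and>
        (\<forall>k. is_gap n S j k \<longrightarrow> card (gap_set n j k) \<le> 1))"

end

theory Submission
  imports Defs
begin

text \<open>
  Distinct vertices of the wheel are at distance 1 or 2, and the center is adjacent to everything,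
  so the center resolves no non-adjacent pair and a set S of cycle vertices resolves two
  non-adjacent cycle vertices exactly when some element of S equals or is adjacent to precisely one
  of them. For n \<ge> 7 this makes S nonlocally resolving iff
  (a) every element of S has another element of S at cyclic distance at most 2, and
  (b) the cycle vertices not dominated by S span at most one edge.
  A gap with g vertices contains g - 2 undominated vertices, so (b) gives (i) and (ii), and (a)
  applied to the common end of two neighbouring gaps gives (iii).
  For (iv), a gap of exactly 3 vertices is widened to 4 by moving one or two elements of the basis
  next to it without increasing its size; afterwards the only undominated vertices are the two
  in the middle of the 4-gap, and a 3-gap would have an undominated middle vertex elsewhere.
\<close>

lemma abs_less_mod_eq_0_iff:
  fixes k m :: int
  assumes "\<bar>k\<bar> < m"
  shows "k mod m = 0 \<longleftrightarrow> k = 0"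
proof
  assume "k mod m = 0"
  then have "m dvd \<bar>k\<bar>" by (simp add: mod_eq_0_iff_dvd)
  show "k = 0"
  proof (rule ccontr)
    assume "k \<noteq> 0"
    then have "m \<le> \<bar>k\<bar>" using \<open>m dvd \<bar>k\<bar>\<close> zdvd_imp_le by simp
    then show False using assms by simp
  qed
qed simp

subsection \<open>Distances in the wheel\<close>

lemma wheel_walk_singleton: "wheel_walk n [a] \<longleftrightarrow> a \<in> wheel_V n"
  by (simp add: wheel_walk_def)

lemma wheel_walk_pair: "wheel_walk n [a, b] \<longleftrightarrow> wheel_adj n a b"
  by (auto simp: wheel_walk_def wheel_adj_def less_Suc_eq)

lemma wheel_walk_triple: "wheel_adj n a b \<Longrightarrow> wheel_adj n b c \<Longrightarrow> wheel_walk n [a, b, c]"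
  by (auto simp: wheel_walk_def wheel_adj_def less_Suc_eq)

lemma wheel_dist_eq:
  assumes "u \<in> wheel_V n" "v \<in> wheel_V n"
  shows "wheel_dist n u v = (if u = v then 0 else if wheel_adj n u v then 1 else 2)"
proof -
  define P where "P k \<longleftrightarrow> (\<exists>xs. wheel_walk n xs \<and> hd xs = u \<and> last xs = v \<and> length xs = Suc k)"
    for k
  have dist: "wheel_dist n u v = (LEAST k. P k)" unfolding wheel_dist_def P_def by simp
  have P0: "P 0 \<longleftrightarrow> u = v"
  proof
    assume "P 0"
    then obtain xs where "hd xs = u" "last xs = v" "length xs = 1" unfolding P_def by auto
    then show "u = v" by (cases xs) auto
  next
    assume "u = v"
    then show "P 0" unfolding P_def using assms by (intro exI[of _ "[u]"]) (simp add: wheel_walk_singleton)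
  qed
  have P1: "P 1 \<Longrightarrow> wheel_adj n u v"
  proof -
    assume "P 1"
    then obtain xs where "wheel_walk n xs" "hd xs = u" "last xs = v" "length xs = 2"
      unfolding P_def by auto
    moreover from \<open>length xs = 2\<close> obtain a b where "xs = [a, b]"
      by (auto simp: length_Suc_conv numeral_2_eq_2)
    ultimately show ?thesis by (simp add: wheel_walk_pair)
  qed
  consider "u = v" | "u \<noteq> v" "wheel_adj n u v" | "u \<noteq> v" "\<not> wheel_adj n u v" by blast
  then show ?thesis
  proof cases
    case 1
    then show ?thesis using dist P0 by simp
  next
    case 2
    then have "P 1" unfolding P_def by (intro exI[of _ "[u, v]"]) (simp add: wheel_walk_pair)
    have "(LEAST k. P k) = 1"
    proof (rule Least_equality)
      fix k assume "P k" then show "1 \<le> k" using P0 2 by (cases k) auto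
    qed fact
    then show ?thesis using dist 2 by simp
  next
    case 3
    then have "u \<noteq> n" "v \<noteq> n" using assms unfolding wheel_adj_def wheel_center_def by auto
    then have "wheel_adj n u n" "wheel_adj n n v"
      using assms unfolding wheel_adj_def wheel_center_def wheel_V_def by auto
    then have "P 2" unfolding P_def by (intro exI[of _ "[u, n, v]"]) (simp add: wheel_walk_triple)
    have "(LEAST k. P k) = 2"
    proof (rule Least_equality)
      fix k assume "P k" then show "2 \<le> k" using P0 P1 3 by (cases k; cases "k - 1"; auto)
    qed fact
    then show ?thesis using dist 3 by simp
  qed
qed

lemma nonlocal_resolving_Diff_center:
  assumes "nonlocal_resolving n S"
  shows "nonlocal_resolving n (S - {n})"
  unfolding nonlocal_resolving_def
proof (intro conjI ballI impI)
  show "S - {n} \<subseteq> wheel_V n" using assms unfolding nonlocal_resolving_def by auto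
  fix u v assume u: "u \<in> wheel_V n" and v: "v \<in> wheel_V n" and uv: "u \<noteq> v \<and> \<not> wheel_adj n u v"
  then obtain x where x: "x \<in> S" "wheel_dist n u x \<noteq> wheel_dist n v x"
    using assms unfolding nonlocal_resolving_def resolves_def by blast
  have "u < n" "v < n" using u v uv unfolding wheel_V_def wheel_adj_def wheel_center_def by auto
  then have "wheel_adj n u n" "wheel_adj n v n" unfolding wheel_adj_def wheel_V_def wheel_center_def by auto
  then have "x \<noteq> n" using x \<open>u < n\<close> \<open>v < n\<close> wheel_dist_eq[where v = n]
    by (auto simp: wheel_V_def)
  then show "resolves n (S - {n}) u v" using x unfolding resolves_def by blast
qed

lemma nonlocal_dim_le_card: "nonlocal_resolving n T \<Longrightarrow> nonlocal_dim n \<le> card T"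
  unfolding nonlocal_dim_def by (rule Least_le) blast

lemma nonlocal_basis_subset_cycle:
  assumes "nonlocal_basis n S"
  shows "S \<subseteq> {..<n}"
proof -
  have R: "nonlocal_resolving n S" and card_S: "card S = nonlocal_dim n"
    using assms unfolding nonlocal_basis_def by auto
  have sub: "S \<subseteq> {..n}" using R unfolding nonlocal_resolving_def wheel_V_def by auto
  have "n \<notin> S"
  proof
    assume "n \<in> S"
    then have "card (S - {n}) < card S" using card_Diff1_less[OF finite_subset[OF sub]] by simp
    moreover have "nonlocal_dim n \<le> card (S - {n})"
      using nonlocal_dim_le_card nonlocal_resolving_Diff_center R by blast
    ultimately show False using card_S by simp
  qed
  then show ?thesis using sub by (force simp: subset_iff le_less)
qed

locale wheel7 =
  fixes n :: nat
  assumes n_ge_7: "7 \<le> n"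
begin

definition rot :: "int \<Rightarrow> nat \<Rightarrow> nat" where
  "rot k x = nat ((int x + k) mod int n)"

lemma n_pos: "0 < n"
  using n_ge_7 by simp

lemma rot_less [simp]: "rot k x < n"
  unfolding rot_def using n_pos by (simp add: nat_less_iff)

lemma rot_rot [simp]: "rot a (rot b x) = rot (b + a) x"
  unfolding rot_def using n_pos by (simp add: mod_add_left_eq add.assoc)

lemma rot_0 [simp]: "x < n \<Longrightarrow> rot 0 x = x"
  unfolding rot_def by simp

lemma rot_of_nat: "rot (int k) x = (x + k) mod n"
proof -
  have "(int x + int k) mod int n = int ((x + k) mod n)" by (simp add: of_nat_mod)
  then show ?thesis unfolding rot_def by simp
qed

lemma rot_1: "rot 1 u = (u + 1) mod n"
  using rot_of_nat[of 1 u] by simp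

lemma rot_eq_rot_iff: "x < n \<Longrightarrow> rot a x = rot b x \<longleftrightarrow> (a - b) mod int n = 0"
proof -
  have "rot a x = rot b x \<longleftrightarrow> (int x + a) mod int n = (int x + b) mod int n"
    unfolding rot_def using n_pos by (simp add: eq_nat_nat_iff)
  also have "\<dots> \<longleftrightarrow> (a - b) mod int n = 0"
    by (simp add: mod_eq_dvd_iff dvd_eq_mod_eq_0)
  finally show "?thesis" .
qed

lemma rot_eq_self_iff:
  "x < n \<Longrightarrow> rot a x = x \<longleftrightarrow> a mod int n = 0"
  "x < n \<Longrightarrow> x = rot a x \<longleftrightarrow> a mod int n = 0"
  using rot_eq_rot_iff[of x a 0] by auto

lemmas rot_distinct_simps = rot_eq_rot_iff abs_less_mod_eq_0_iff rot_eq_self_iff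

lemma rot_eq_iff_eq_rot: "z < n \<Longrightarrow> w < n \<Longrightarrow> rot d z = w \<longleftrightarrow> z = rot (-d) w"
proof
  assume "z < n" "w < n" "rot d z = w"
  then show "z = rot (-d) w" using rot_rot[of "-d" d z] by simp
next
  assume "z < n" "w < n" "z = rot (-d) w"
  then show "rot d z = w" using rot_rot[of d "-d" w] by simp
qed

lemma rot_inj_iff: "x < n \<Longrightarrow> y < n \<Longrightarrow> rot a x = rot a y \<longleftrightarrow> x = y"
  using rot_eq_iff_eq_rot[of x "rot a y" a] by auto

lemma wheel_adj_cycle_iff:
  assumes u: "u < n" and y: "y < n"
  shows "wheel_adj n u y \<longleftrightarrow> y = rot 1 u \<or> y = rot (-1) u"
proof -
  have pred: "u = (y + 1) mod n \<longleftrightarrow> y = rot (-1) u"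
    using rot_eq_iff_eq_rot[OF y u, of 1] by (auto simp: rot_1)
  have "rot 1 u \<noteq> u" "rot (-1) u \<noteq> u"
    using u n_ge_7 by (simp_all add: rot_distinct_simps)
  then show ?thesis unfolding wheel_adj_def wheel_V_def wheel_center_def
    using u y pred by (auto simp: rot_1)
qed

lemma wheel_dist_cycle:
  "u < n \<Longrightarrow> x < n \<Longrightarrow>
    wheel_dist n u x = (if u = x then 0 else if x = rot 1 u \<or> x = rot (-1) u then 1 else 2)"
  using wheel_dist_eq[where n = n and u = u and v = x] wheel_adj_cycle_iff[of u x] by (simp add: wheel_V_def)

subsection \<open>Nonlocal resolving sets of cycle vertices\<close>

definition partnered :: "nat set \<Rightarrow> bool" where
  "partnered S \<longleftrightarrow> (\<forall>x\<in>S. rot (-2) x \<in> S \<or> rot (-1) x \<in> S \<or> rot 1 x \<in> S \<or> rot 2 x \<in> S)"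

definition undominated :: "nat set \<Rightarrow> nat \<Rightarrow> bool" where
  "undominated S z \<longleftrightarrow> rot (-1) z \<notin> S \<and> z \<notin> S \<and> rot 1 z \<notin> S"

definition undominated_near :: "nat set \<Rightarrow> bool" where
  "undominated_near S \<longleftrightarrow>
     (\<forall>z<n. \<forall>w<n. undominated S z \<longrightarrow> undominated S w \<longrightarrow> w = rot (-1) z \<or> w = z \<or> w = rot 1 z)"

lemma partneredD:
  "partnered S \<Longrightarrow> x \<in> S \<Longrightarrow> rot (-2) x \<in> S \<or> rot (-1) x \<in> S \<or> rot 1 x \<in> S \<or> rot 2 x \<in> S"
  unfolding partnered_def by blast

lemma undominated_nearD:
  "undominated_near S \<Longrightarrow> z < n \<Longrightarrow> w < n \<Longrightarrow> undominated S z \<Longrightarrow> undominated S w \<Longrightarrow>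
    w = rot (-1) z \<or> w = z \<or> w = rot 1 z"
  unfolding undominated_near_def by blast

lemma nonlocal_resolving_cycle_iff:
  assumes "S \<subseteq> {..<n}"
  shows "nonlocal_resolving n S \<longleftrightarrow>
    (\<forall>u<n. \<forall>v<n. u \<noteq> v \<longrightarrow> \<not> wheel_adj n u v \<longrightarrow> resolves n S u v)"
proof -
  have "u < n" "v < n" if "u \<in> wheel_V n" "v \<in> wheel_V n" "\<not> wheel_adj n u v" "u \<noteq> v" for u v
    using that unfolding wheel_V_def wheel_adj_def wheel_center_def by auto
  then show ?thesis using assms unfolding nonlocal_resolving_def by (auto simp: wheel_V_def)
qed

lemma not_resolves_cycle:
  assumes S: "S \<subseteq> {..<n}" and u: "u < n" and v: "v < n"
    and uv: "u \<noteq> v" "\<not> wheel_adj n u v" and not_res: "\<not> resolves n S u v"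
  shows "u \<notin> S" "v \<notin> S"
    "\<And>y. y \<in> S \<Longrightarrow> (y = rot 1 u \<or> y = rot (-1) u) \<longleftrightarrow> (y = rot 1 v \<or> y = rot (-1) v)"
proof -
  have same: "wheel_dist n u y = wheel_dist n v y" if "y \<in> S" for y
    using not_res that unfolding resolves_def by auto
  have adj: "v \<noteq> rot 1 u" "v \<noteq> rot (-1) u" using uv u v by (auto simp: wheel_adj_cycle_iff)
  show uS: "u \<notin> S" using same[of u] u v uv adj by (auto simp: wheel_dist_cycle split: if_splits)
  show vS: "v \<notin> S" using same[of v] u v uv adj by (auto simp: wheel_dist_cycle split: if_splits)
  fix y assume y: "y \<in> S"
  then have "y \<noteq> u" "y \<noteq> v" "y < n" using uS vS S by auto
  then show "(y = rot 1 u \<or> y = rot (-1) u) \<longleftrightarrow> (y = rot 1 v \<or> y = rot (-1) v)"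
    using same[OF y] u v by (auto simp: wheel_dist_cycle split: if_splits)
qed

lemma nonlocal_resolving_partnered:
  assumes S: "S \<subseteq> {..<n}" and R: "nonlocal_resolving n S"
  shows "partnered S"
  unfolding partnered_def
proof (rule ballI, rule ccontr)
  fix x assume x: "x \<in> S" and "\<not> (rot (-2) x \<in> S \<or> rot (-1) x \<in> S \<or> rot 1 x \<in> S \<or> rot 2 x \<in> S)"
  then have far: "rot (-2) x \<notin> S" "rot (-1) x \<notin> S" "rot 1 x \<notin> S" "rot 2 x \<notin> S" by auto
  have xn: "x < n" using x S by auto
  have "rot (-1) x \<noteq> rot 1 x" "\<not> wheel_adj n (rot (-1) x) (rot 1 x)"
    using xn n_ge_7 by (auto simp: wheel_adj_cycle_iff rot_distinct_simps)
  then have "resolves n S (rot (-1) x) (rot 1 x)"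
    using R S by (simp add: nonlocal_resolving_cycle_iff)
  then obtain y where y: "y \<in> S" "wheel_dist n (rot (-1) x) y \<noteq> wheel_dist n (rot 1 x) y"
    unfolding resolves_def by blast
  text \<open>Only x \<plusminus> 1 and x \<plusminus> 2 separate the two neighbours of x.\<close>
  have "y < n" "y \<noteq> rot (-1) x" "y \<noteq> rot 1 x" "y \<noteq> rot (-2) x" "y \<noteq> rot 2 x"
    using y far S by auto
  then show False using y(2) xn n_ge_7 by (auto simp: wheel_dist_cycle rot_distinct_simps)
qed

lemma nonlocal_resolving_undominated_near:
  assumes S: "S \<subseteq> {..<n}" and R: "nonlocal_resolving n S"
  shows "undominated_near S"
  unfolding undominated_near_def
proof (intro allI impI, rule ccontr)
  fix z w assume z: "z < n" and w: "w < n" and und: "undominated S z" "undominated S w"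
    and "\<not> (w = rot (-1) z \<or> w = z \<or> w = rot 1 z)"
  then have "w \<noteq> z" "\<not> wheel_adj n z w" by (auto simp: wheel_adj_cycle_iff)
  then have "resolves n S z w" using R S z w by (simp add: nonlocal_resolving_cycle_iff)
  then obtain y where y: "y \<in> S" "wheel_dist n z y \<noteq> wheel_dist n w y"
    unfolding resolves_def by blast
  have "y < n" "y \<noteq> rot (-1) z" "y \<noteq> z" "y \<noteq> rot 1 z" "y \<noteq> rot (-1) w" "y \<noteq> w" "y \<noteq> rot 1 w"
    using y und S unfolding undominated_def by auto
  then show False using y(2) z w by (auto simp: wheel_dist_cycle)
qed

lemma resolves_if_partnered_undominated_near:
  assumes S: "S \<subseteq> {..<n}" and A: "partnered S" and B: "undominated_near S"
    and u: "u < n" and v: "v < n" and uv: "u \<noteq> v" "\<not> wheel_adj n u v"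
  shows "resolves n S u v"
proof (rule ccontr)
  assume "\<not> resolves n S u v"
  note unresolved = not_resolves_cycle[OF S u v uv this]
  have common_neighbour: False
    if a: "a < n" "a \<notin> S" "rot 1 a \<in> S" and b: "b < n" "b \<notin> S" "a \<noteq> b"
      and same: "\<And>y. y \<in> S \<Longrightarrow> (y = rot 1 a \<or> y = rot (-1) a) \<longleftrightarrow> (y = rot 1 b \<or> y = rot (-1) b)"
    for a b
  proof -
    have "rot 1 a \<noteq> rot 1 b" using a b rot_inj_iff by blast
    then have "rot (-1) b = rot 1 a" using same[OF a(3)] by simp
    then have b2: "b = rot 2 a" using rot_eq_iff_eq_rot[of b "rot 1 a" "-1"] a b by simp
    text \<open>The common neighbour rot 1 a then has no partner in S.\<close>
    have "rot (-1) a \<notin> S" "rot 3 a \<notin> S"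
      using same[of "rot (-1) a"] same[of "rot 3 a"] b2 a n_ge_7 by (auto simp: rot_distinct_simps)
    then show False using partneredD[OF A a(3)] a b b2 by simp
  qed
  have same_vu: "(y = rot 1 v \<or> y = rot (-1) v) \<longleftrightarrow> (y = rot 1 u \<or> y = rot (-1) u)" if "y \<in> S" for y
    using unresolved(3)[OF that] by blast
  consider "rot 1 u \<in> S" | "rot 1 v \<in> S" | "rot 1 u \<notin> S" "rot 1 v \<notin> S" by blast
  then show False
  proof cases
    case 1
    then show False using common_neighbour[of u v] u v uv unresolved by blast
  next
    case 2
    then show False using common_neighbour[of v u] u v uv unresolved same_vu by blast
  next
    case 3
    text \<open>A neighbour of u in S is also a neighbour of v, so it would be rot 1 u or rot 1 v.\<close>
    then have "rot (-1) u \<notin> S" "rot (-1) v \<notin> S"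
      using unresolved(3)[of "rot (-1) u"] same_vu[of "rot (-1) v"] u v uv rot_inj_iff by auto
    then have "undominated S u" "undominated S v"
      using 3 unresolved unfolding undominated_def by auto
    then show False using undominated_nearD[OF B u v] uv u by (auto simp: wheel_adj_cycle_iff)
  qed
qed

lemma nonlocal_resolving_iff:
  assumes "S \<subseteq> {..<n}"
  shows "nonlocal_resolving n S \<longleftrightarrow> partnered S \<and> undominated_near S"
  using assms nonlocal_resolving_partnered nonlocal_resolving_undominated_near
    resolves_if_partnered_undominated_near by (auto simp: nonlocal_resolving_cycle_iff)

subsection \<open>Gaps\<close>

lemma is_gapE:
  assumes S: "S \<subseteq> {..<n}" and g: "is_gap n S i j"
  obtains d where "0 < d" "d < n" "j = rot (int d) i" "card (gap_set n i j) = d - 1"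
    "\<And>k. 0 < k \<Longrightarrow> k < d \<Longrightarrow> rot (int k) i \<notin> S" "i \<in> S" "j \<in> S" "i < n"
proof -
  define d where "d = (j + n - i) mod n"
  have iS: "i \<in> S" and jS: "j \<in> S" and ij: "i \<noteq> j" using g unfolding is_gap_def by auto
  then have i: "i < n" and j: "j < n" using S by auto
  have d_lt: "d < n" unfolding d_def using n_pos by simp
  have jd: "j = rot (int d) i"
  proof -
    have "(i + d) mod n = (i + (j + n - i)) mod n" unfolding d_def by (simp add: mod_add_right_eq)
    also have "i + (j + n - i) = j + n" using i by simp
    finally show ?thesis using j by (simp add: rot_of_nat)
  qed
  then have d_pos: "0 < d" using ij i by (cases d) auto
  have gap: "gap_set n i j = (\<lambda>k. rot (int k) i) ` {0<..<d}"
    unfolding gap_set_def d_def rot_of_nat by auto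
  have "inj_on (\<lambda>k. rot (int k) i) {0<..<d}"
  proof (rule inj_onI)
    fix a b assume "a \<in> {0<..<d}" "b \<in> {0<..<d}" "rot (int a) i = rot (int b) i"
    moreover have "\<bar>int a - int b\<bar> < int n" using calculation d_lt by auto
    ultimately show "a = b" using i by (simp add: rot_distinct_simps)
  qed
  then have "card (gap_set n i j) = d - 1" unfolding gap by (simp add: card_image)
  moreover have "rot (int k) i \<notin> S" if "0 < k" "k < d" for k
  proof -
    have "rot (int k) i \<in> gap_set n i j" unfolding gap using that by auto
    then show ?thesis using g unfolding is_gap_def by blast
  qed
  ultimately show thesis using that d_pos d_lt jd iS jS i by blast
qed

lemma gap_card_le_4:
  assumes S: "S \<subseteq> {..<n}" and B: "undominated_near S" and g: "is_gap n S i j"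
  shows "card (gap_set n i j) \<le> 4"
proof (rule ccontr)
  assume big: "\<not> ?thesis"
  obtain d where "card (gap_set n i j) = d - 1" "i < n"
    and out: "\<And>k. 0 < k \<Longrightarrow> k < d \<Longrightarrow> rot (int k) i \<notin> S"
    using is_gapE[OF S g] by metis
  then have "6 \<le> d" using big by simp
  then have "rot 1 i \<notin> S" "rot 2 i \<notin> S" "rot 3 i \<notin> S" "rot 4 i \<notin> S" "rot 5 i \<notin> S"
    using out[of 1] out[of 2] out[of 3] out[of 4] out[of 5] by simp_all
  then have "undominated S (rot 2 i)" "undominated S (rot 4 i)" unfolding undominated_def by simp_all
  from undominated_nearD[OF B _ _ this] show False using \<open>i < n\<close> n_ge_7 by (simp add: rot_distinct_simps)
qed

lemma large_gaps_eq:
  assumes S: "S \<subseteq> {..<n}" and B: "undominated_near S"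
    and g: "is_gap n S i j" "card (gap_set n i j) \<ge> 3"
    and g': "is_gap n S i' j'" "card (gap_set n i' j') \<ge> 3"
  shows "i = i' \<and> j = j'"
proof -
  obtain d where d: "0 < d" "j = rot (int d) i" "card (gap_set n i j) = d - 1" "i \<in> S" "j \<in> S" "i < n"
    and out: "\<And>k. 0 < k \<Longrightarrow> k < d \<Longrightarrow> rot (int k) i \<notin> S"
    using is_gapE[OF S g(1)] by metis
  obtain d' where d': "0 < d'" "j' = rot (int d') i'" "card (gap_set n i' j') = d' - 1" "i' \<in> S" "j' \<in> S" "i' < n"
    and out': "\<And>k. 0 < k \<Longrightarrow> k < d' \<Longrightarrow> rot (int k) i' \<notin> S"
    using is_gapE[OF S g'(1)] by metis
  have "4 \<le> d" "4 \<le> d'" using d(3) d'(3) g(2) g'(2) by simp_all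
  then have three: "rot 1 i \<notin> S" "rot 2 i \<notin> S" "rot 3 i \<notin> S"
      "rot 1 i' \<notin> S" "rot 2 i' \<notin> S" "rot 3 i' \<notin> S"
    using out[of 1] out[of 2] out[of 3] out'[of 1] out'[of 2] out'[of 3] by simp_all
  then have "undominated S (rot 2 i)" "undominated S (rot 2 i')" unfolding undominated_def by simp_all
  from undominated_nearD[OF B _ _ this]
  have "rot 2 i' = rot 1 i \<or> rot 2 i' = rot 2 i \<or> rot 2 i' = rot 3 i" by simp
  moreover have "rot 2 i' \<noteq> rot 1 i"
    using rot_eq_iff_eq_rot[of i' "rot 1 i" 2] three d(4,6) d'(6) by auto
  moreover have "rot 2 i' \<noteq> rot 3 i"
    using rot_eq_iff_eq_rot[of i' "rot 3 i" 2] three d(6) d'(4,6) by auto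
  ultimately have "i' = i" using rot_inj_iff d(6) d'(6) by blast
  moreover have "d = d'"
  proof (rule ccontr)
    assume "d \<noteq> d'"
    then consider "d < d'" | "d' < d" by linarith
    then show False
      by cases (use out out' d d' \<open>i' = i\<close> in auto)
  qed
  ultimately show ?thesis using d(2) d'(2) by simp
qed

lemma neighbouring_gaps_small:
  assumes S: "S \<subseteq> {..<n}" and A: "partnered S" and g: "is_gap n S h i" "is_gap n S i j"
  shows "card (gap_set n h i) \<le> 1 \<or> card (gap_set n i j) \<le> 1"
proof (rule ccontr)
  assume big: "\<not> ?thesis"
  obtain d where d: "i = rot (int d) h" "card (gap_set n h i) = d - 1"
    and before: "\<And>k. 0 < k \<Longrightarrow> k < d \<Longrightarrow> rot (int k) h \<notin> S"
    using is_gapE[OF S g(1)] by metis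
  obtain d' where d': "card (gap_set n i j) = d' - 1" "i \<in> S"
    and after: "\<And>k. 0 < k \<Longrightarrow> k < d' \<Longrightarrow> rot (int k) i \<notin> S"
    using is_gapE[OF S g(2)] by metis
  have "3 \<le> d" "3 \<le> d'" using d(2) d'(1) big by auto
  then have "rot (-2) i \<notin> S" "rot (-1) i \<notin> S" "rot 1 i \<notin> S" "rot 2 i \<notin> S"
    using before[of "d - 2"] before[of "d - 1"] after[of 1] after[of 2]
    unfolding d(1) by (simp_all add: of_nat_diff)
  then show False using partneredD[OF A d'(2)] by blast
qed

lemma card_ge_2_if_undominated_near:
  assumes S: "S \<subseteq> {..<n}" and B: "undominated_near S"
  shows "2 \<le> card S"
proof (rule ccontr)
  assume "\<not> ?thesis"
  then have "\<forall>a\<in>S. \<forall>b\<in>S. a = b"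
    using card_le_Suc0_iff_eq[OF finite_subset[OF S]] by simp
  then obtain s where s: "s < n" "S \<subseteq> {s}"
    using S n_pos by (cases "S = {}") blast+
  then have "undominated S (rot 2 s)" "undominated S (rot 4 s)"
    unfolding undominated_def using n_ge_7 by (auto simp: rot_distinct_simps)
  from undominated_nearD[OF B _ _ this] show False using s n_ge_7 by (simp add: rot_distinct_simps)
qed

lemma gap_props_if_partnered_undominated_near:
  assumes "S \<subseteq> {..<n}" "partnered S" "undominated_near S"
  shows "gap_props n S"
proof -
  have "card (gap_set n h i) \<le> 1"
    if "is_gap n S h i" "is_gap n S i j" "2 \<le> card (gap_set n i j)" for h i j
    using neighbouring_gaps_small[OF assms(1,2) that(1,2)] that(3) by linarith
  moreover have "card (gap_set n j k) \<le> 1"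
    if "is_gap n S i j" "is_gap n S j k" "2 \<le> card (gap_set n i j)" for i j k
    using neighbouring_gaps_small[OF assms(1,2) that(1,2)] that(3) by linarith
  moreover note gap_card_le_4[OF assms(1,3)] large_gaps_eq[OF assms(1,3)]
  ultimately show ?thesis unfolding gap_props_def by blast
qed

subsection \<open>Widening a gap of three vertices\<close>

definition four_gap_at :: "nat set \<Rightarrow> nat \<Rightarrow> bool" where
  "four_gap_at T x \<longleftrightarrow> x \<in> T \<and> rot 1 x \<notin> T \<and> rot 2 x \<notin> T \<and> rot 3 x \<notin> T \<and> rot 4 x \<notin> T \<and>
     (\<forall>z<n. undominated T z \<longrightarrow> z = rot 2 x \<or> z = rot 3 x)"

lemma four_gap_at_undominated_near:
  assumes "four_gap_at T x"
  shows "undominated_near T"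
  unfolding undominated_near_def
proof (intro allI impI)
  fix z w assume "z < n" "w < n" "undominated T z" "undominated T w"
  then have "z = rot 2 x \<or> z = rot 3 x" "w = rot 2 x \<or> w = rot 3 x"
    using assms unfolding four_gap_at_def by blast+
  then show "w = rot (-1) z \<or> w = z \<or> w = rot 1 z" by auto
qed

lemma four_gap_at_no_gap_of_three:
  assumes T: "T \<subseteq> {..<n}" and x: "four_gap_at T x" and g: "is_gap n T i j"
  shows "card (gap_set n i j) \<noteq> 3"
proof
  assume "card (gap_set n i j) = 3"
  moreover obtain d where d: "j = rot (int d) i" "card (gap_set n i j) = d - 1" "i \<in> T" "j \<in> T" "i < n"
    and out: "\<And>k. 0 < k \<Longrightarrow> k < d \<Longrightarrow> rot (int k) i \<notin> T"
    using is_gapE[OF T g] by metis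
  ultimately have "d = 4" by simp
  then have three: "rot 1 i \<notin> T" "rot 2 i \<notin> T" "rot 3 i \<notin> T" and "rot 4 i \<in> T"
    using out[of 1] out[of 2] out[of 3] d by simp_all
  have "x < n" using x T unfolding four_gap_at_def by auto
  have "undominated T (rot 2 i)" using three unfolding undominated_def by simp
  then have "rot 2 i = rot 2 x \<or> rot 2 i = rot 3 x" using x unfolding four_gap_at_def by simp
  then have "i = x \<or> i = rot 1 x"
    using rot_inj_iff[of i x 2] rot_eq_iff_eq_rot[of i "rot 3 x" 2] \<open>i < n\<close> \<open>x < n\<close> by auto
  then show False using three \<open>rot 4 i \<in> T\<close> \<open>i \<in> T\<close> x unfolding four_gap_at_def by auto
qed

lemma four_gap_at_nonlocal_resolving:
  assumes "T \<subseteq> {..<n}" "partnered T" "four_gap_at T x"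
  shows "nonlocal_resolving n T" "gap_props n T"
  using assms four_gap_at_undominated_near nonlocal_resolving_iff
    gap_props_if_partnered_undominated_near by blast+

context
  fixes S :: "nat set" and i :: nat
  assumes S: "S \<subseteq> {..<n}" and A: "partnered S" and B: "undominated_near S"
    and gap3: "i \<in> S" "rot 1 i \<notin> S" "rot 2 i \<notin> S" "rot 3 i \<notin> S" "rot 4 i \<in> S"
begin

lemma gap3_start_less: "i < n"
  using S gap3 by auto

lemma undominated_eq_gap3_middle: "z < n \<Longrightarrow> undominated S z \<Longrightarrow> z = rot 2 i"
proof -
  assume z: "z < n" "undominated S z"
  have "undominated S (rot 2 i)" using gap3 unfolding undominated_def by simp
  from undominated_nearD[OF B _ z(1) this z(2)] have "z = rot 1 i \<or> z = rot 2 i \<or> z = rot 3 i" by simp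
  then show "z = rot 2 i" using z gap3 gap3_start_less unfolding undominated_def by auto
qed

lemma four_gap_move_left_end:
  assumes left: "rot (-1) i \<notin> S"
  defines "T \<equiv> insert (rot (-1) i) (S - {i})"
  shows "partnered T" "four_gap_at T (rot (-1) i)"
proof -
  note i = gap3_start_less gap3
  have m2: "rot (-2) i \<in> S" using partneredD[OF A gap3(1)] gap3 left by auto
  show "partnered T" unfolding partnered_def
  proof
    fix y assume y: "y \<in> T"
    have yn: "y < n" using y S i unfolding T_def by auto
    show "rot (-2) y \<in> T \<or> rot (-1) y \<in> T \<or> rot 1 y \<in> T \<or> rot 2 y \<in> T"
    proof (cases "y = rot (-1) i")
      case True then show ?thesis using m2 i n_ge_7 unfolding T_def by (simp add: rot_distinct_simps)
    next
      case False
      then have yS: "y \<in> S" "y \<noteq> i" using y unfolding T_def by auto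
      show ?thesis using partneredD[OF A yS(1)] yS yn i m2 left n_ge_7 unfolding T_def
        by (auto simp: rot_distinct_simps rot_eq_iff_eq_rot)
    qed
  qed
  have "z = rot 2 (rot (-1) i) \<or> z = rot 3 (rot (-1) i)" if "z < n" "undominated T z" for z
    using that undominated_eq_gap3_middle[of z] i left n_ge_7 unfolding undominated_def T_def
    by (auto simp: rot_distinct_simps rot_eq_iff_eq_rot)
  then show "four_gap_at T (rot (-1) i)"
    using i n_ge_7 unfolding four_gap_at_def T_def by (simp add: rot_distinct_simps)
qed

lemma four_gap_move_right_end:
  assumes right: "rot 5 i \<notin> S"
  defines "T \<equiv> insert (rot 5 i) (S - {rot 4 i})"
  shows "partnered T" "four_gap_at T i"
proof -
  note i = gap3_start_less gap3
  have m6: "rot 6 i \<in> S" using partneredD[OF A gap3(5)] i right by auto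
  show "partnered T" unfolding partnered_def
  proof
    fix y assume y: "y \<in> T"
    have yn: "y < n" using y S i unfolding T_def by auto
    show "rot (-2) y \<in> T \<or> rot (-1) y \<in> T \<or> rot 1 y \<in> T \<or> rot 2 y \<in> T"
    proof (cases "y = rot 5 i")
      case True then show ?thesis using m6 i n_ge_7 unfolding T_def by (simp add: rot_distinct_simps)
    next
      case False
      then have yS: "y \<in> S" "y \<noteq> rot 4 i" using y unfolding T_def by auto
      show ?thesis using partneredD[OF A yS(1)] yS yn i m6 right n_ge_7 unfolding T_def
        by (auto simp: rot_distinct_simps rot_eq_iff_eq_rot)
    qed
  qed
  have "z = rot 2 i \<or> z = rot 3 i" if "z < n" "undominated T z" for z
    using that undominated_eq_gap3_middle[of z] i right n_ge_7 unfolding undominated_def T_def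
    by (auto simp: rot_distinct_simps rot_eq_iff_eq_rot)
  then show "four_gap_at T i"
    using i n_ge_7 unfolding four_gap_at_def T_def by (simp add: rot_distinct_simps)
qed

lemma four_gap_drop_left_end:
  assumes left: "rot (-1) i \<in> S" "rot (-2) i \<in> S \<or> rot (-3) i \<in> S"
  defines "T \<equiv> S - {i}"
  shows "partnered T" "four_gap_at T (rot (-1) i)"
proof -
  note i = gap3_start_less gap3
  show "partnered T" unfolding partnered_def
  proof
    fix y assume y: "y \<in> T"
    then have yn: "y < n" and yS: "y \<in> S" "y \<noteq> i" using S unfolding T_def by auto
    show "rot (-2) y \<in> T \<or> rot (-1) y \<in> T \<or> rot 1 y \<in> T \<or> rot 2 y \<in> T"
      using partneredD[OF A yS(1)] yS yn i left n_ge_7 unfolding T_def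
      by (auto simp: rot_distinct_simps rot_eq_iff_eq_rot)
  qed
  have "z = rot 2 (rot (-1) i) \<or> z = rot 3 (rot (-1) i)" if "z < n" "undominated T z" for z
    using that undominated_eq_gap3_middle[of z] i left n_ge_7 unfolding undominated_def T_def
    by (auto simp: rot_distinct_simps rot_eq_iff_eq_rot)
  then show "four_gap_at T (rot (-1) i)"
    using i left n_ge_7 unfolding four_gap_at_def T_def by (simp add: rot_distinct_simps)
qed

lemma four_gap_exchange:
  assumes ends: "rot (-1) i \<in> S" "rot 5 i \<in> S" "rot (-2) i \<notin> S" "rot (-3) i \<notin> S"
  defines "T \<equiv> insert (rot (-2) i) (insert (rot 3 i) (S - {rot (-1) i, i, rot 4 i}))"
  shows "partnered T" "four_gap_at T (rot (-2) i)" "card T < card S"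
proof -
  note i = gap3_start_less gap3
  have m4: "rot (-4) i \<in> S"
  proof (rule ccontr)
    assume "rot (-4) i \<notin> S"
    then have "undominated S (rot (-3) i)" using ends unfolding undominated_def by simp
    then have "rot (-3) i = rot 2 i" using undominated_eq_gap3_middle by simp
    then show False using i n_ge_7 by (simp add: rot_distinct_simps)
  qed
  text \<open>For n = 7 and n = 8 the vertices rot 3 i and rot 5 i would coincide with rot (-4) i and rot (-3) i.\<close>
  have n9: "9 \<le> n"
  proof (rule ccontr)
    assume "\<not> 9 \<le> n"
    then consider "n = 7" | "n = 8" using n_ge_7 by linarith
    then show False
    proof cases
      case 1
      then have "rot 3 i = rot (-4) i" using rot_eq_rot_iff[of i 3 "-4"] i by simp
      then show False using m4 i by simp
    next
      case 2
      then have "rot 5 i = rot (-3) i" using rot_eq_rot_iff[of i 5 "-3"] i by simp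
      then show False using ends by simp
    qed
  qed
  show "partnered T" unfolding partnered_def
  proof
    fix y assume y: "y \<in> T"
    have yn: "y < n" using y S i unfolding T_def by auto
    show "rot (-2) y \<in> T \<or> rot (-1) y \<in> T \<or> rot 1 y \<in> T \<or> rot 2 y \<in> T"
    proof (cases "y = rot (-2) i \<or> y = rot 3 i")
      case True
      have "rot (-4) i \<in> T" "rot 5 i \<in> T" using m4 ends i n9 unfolding T_def by (simp_all add: rot_distinct_simps)
      then show ?thesis using True i by auto
    next
      case False
      then have yS: "y \<in> S" "y \<noteq> rot (-1) i" "y \<noteq> i" "y \<noteq> rot 4 i" using y unfolding T_def by auto
      show ?thesis using partneredD[OF A yS(1)] yS yn i m4 ends n9 unfolding T_def
        by (auto simp: rot_distinct_simps rot_eq_iff_eq_rot)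
    qed
  qed
  have "z = rot 2 (rot (-2) i) \<or> z = rot 3 (rot (-2) i)" if "z < n" "undominated T z" for z
    using that undominated_eq_gap3_middle[of z] i ends m4 n9 unfolding undominated_def T_def
    by (auto simp: rot_distinct_simps rot_eq_iff_eq_rot)
  then show "four_gap_at T (rot (-2) i)"
    using i ends n_ge_7 unfolding four_gap_at_def T_def by (simp add: rot_distinct_simps)
  have fin: "finite S" using S finite_subset by blast
  have removed: "{rot (-1) i, i, rot 4 i} \<subseteq> S" using ends i by auto
  have "card {rot (-1) i, i, rot 4 i} = 3" using i n_ge_7 by (simp add: rot_distinct_simps)
  then have "3 \<le> card S" using card_mono[OF fin removed] by simp
  then show "card T < card S"
    using fin removed i ends n_ge_7 unfolding T_def by (simp add: card_Diff_subset rot_distinct_simps)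
qed

lemma exists_four_gap_at:
  obtains T x where "T \<subseteq> {..<n}" "partnered T" "four_gap_at T x" "card T \<le> card S"
proof -
  have fin: "finite S" using S finite_subset by blast
  have "0 < card S" using fin gap3(1) card_gt_0_iff by blast
  consider "rot (-1) i \<notin> S" | "rot (-1) i \<in> S" "rot 5 i \<notin> S"
    | "rot (-1) i \<in> S" "rot (-2) i \<in> S \<or> rot (-3) i \<in> S"
    | "rot (-1) i \<in> S" "rot 5 i \<in> S" "rot (-2) i \<notin> S" "rot (-3) i \<notin> S" by blast
  then show thesis
  proof cases
    case 1
    then show thesis using that[OF _ four_gap_move_left_end] S fin gap3 \<open>0 < card S\<close> by (auto simp: card_insert_if)
  next
    case 2
    then show thesis using that[OF _ four_gap_move_right_end] S fin gap3 \<open>0 < card S\<close> by (auto simp: card_insert_if)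
  next
    case 3
    then show thesis using that[OF _ four_gap_drop_left_end] S fin by (auto simp: card_Diff1_le)
  next
    case 4
    then show thesis using that[OF _ four_gap_exchange(1,2)] four_gap_exchange(3) S by fastforce
  qed
qed

end

lemma nonlocal_basis_gap_props:
  assumes "nonlocal_basis n S"
  shows "S \<subseteq> {..<n}" "partnered S" "undominated_near S" "2 \<le> card S" "gap_props n S"
proof -
  show S: "S \<subseteq> {..<n}" using nonlocal_basis_subset_cycle[OF assms] .
  moreover have "nonlocal_resolving n S" using assms unfolding nonlocal_basis_def by simp
  ultimately show A: "partnered S" and B: "undominated_near S" using nonlocal_resolving_iff by blast+
  show "2 \<le> card S" using card_ge_2_if_undominated_near[OF S B] .
  show "gap_props n S" using gap_props_if_partnered_undominated_near[OF S A B] .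
qed

lemma exists_nonlocal_basis_without_gap_of_three:
  assumes basis: "nonlocal_basis n S"
  shows "\<exists>S'. nonlocal_basis n S' \<and> S' \<subseteq> {..<n} \<and> gap_props n S' \<and>
           (\<forall>i j. is_gap n S' i j \<longrightarrow> card (gap_set n i j) \<noteq> 3)"
proof (cases "\<forall>i j. is_gap n S i j \<longrightarrow> card (gap_set n i j) \<noteq> 3")
  case True
  then show ?thesis using basis nonlocal_basis_gap_props[OF basis] by blast
next
  case False
  note S = nonlocal_basis_gap_props[OF basis]
  obtain i j where g: "is_gap n S i j" "card (gap_set n i j) = 3" using False by blast
  then obtain d where d: "j = rot (int d) i" "d - 1 = 3" "i \<in> S" "j \<in> S"
    and out: "\<And>k. 0 < k \<Longrightarrow> k < d \<Longrightarrow> rot (int k) i \<notin> S"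
    using is_gapE[OF S(1) g(1)] by metis
  then have "d = 4" by simp
  then have "rot 1 i \<notin> S" "rot 2 i \<notin> S" "rot 3 i \<notin> S" "rot 4 i \<in> S"
    using out[of 1] out[of 2] out[of 3] d by simp_all
  then obtain T x where T: "T \<subseteq> {..<n}" "partnered T" "four_gap_at T x" "card T \<le> card S"
    using exists_four_gap_at[OF S(1-3) \<open>i \<in> S\<close>] by blast
  have "nonlocal_resolving n T" "gap_props n T" using four_gap_at_nonlocal_resolving[OF T(1-3)] by auto
  moreover from this(1) have "card T = nonlocal_dim n"
    using nonlocal_dim_le_card T(4) basis unfolding nonlocal_basis_def by fastforce
  ultimately show ?thesis
    using T four_gap_at_no_gap_of_three unfolding nonlocal_basis_def by blast
qed

end

theorem lemma4p2:
  fixes n :: nat and S :: "nat set"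
  assumes "n \<ge> 7" and "nonlocal_basis n S"
  shows "S \<subseteq> {..<n} \<and> card S \<ge> 2 \<and> gap_props n S \<and>
         (\<exists>S'. nonlocal_basis n S' \<and> S' \<subseteq> {..<n} \<and> gap_props n S' \<and>
               (\<forall>i j. is_gap n S' i j \<longrightarrow> card (gap_set n i j) \<noteq> 3))"
proof -
  interpret wheel7 n using assms(1) by unfold_locales
  show ?thesis
    using nonlocal_basis_gap_props[OF assms(2)] exists_nonlocal_basis_without_gap_of_three[OF assms(2)]
    by blast
qed

end
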